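(* Let $|\Psi\rangle\in\mathcal{B}^n$ be an $M$-party stabilizer state with stabilizer group $S$, and suppose $S=S_{loc}:=\sum_{\alpha\in M}S_{\hat\alpha}$. Then $\Gamma(\Psi)=\{|\Psi\rangle\langle\Psi|\}$, where $\Gamma(\Psi)$ is the set of density operators $\rho$ on $\mathcal{B}^n$ with $\mathrm{Tr}_\alpha\rho=\mathrm{Tr}_\alpha|\Psi\rangle\langle\Psi|$ for all $\alpha\in M$.
   Context: Let $G^n\cong\mathbb{F}_2^{2n}$, with elements $f=(a_1,b_1,\dots,a_n,b_n)$; $\sigma_{00}=I,\sigma_{10}=\sigma^x,\sigma_{01}=\sigma^z,\sigma_{11}=\sigma^y$, $\sigma(f)=\sigma_{a_1b_1}\otimes\cdots\otimes\sigma_{a_nb_n}$ on $\mathcal{B}^n=(\mathbb{C}^2)^{\otimes n}$; symplectic form $\omega(f,f')=\sum_j(a_jb_j'+b_ja_j')\bmod 2$. A subspace $S$ is self-dual if $S=\{f:\omega(f,g)=0\ \forall g\in S\}$; a stabilizer state with stabilizer group $S$ (self-dual) is the unique up-to-phase unit vector with $\sigma(f)|\Psi\rangle=\epsilon(f)|\Psi\rangle$ for all $f\in S$ for fixed consistent signs $\epsilon(f)\in\{\pm1\}$. Party $\alpha\in M$ (a finite set) holds $n_\alpha$ qubits, $n=\sum_\alpha n_\alpha$; $f_\alpha$ is the restriction of $f$ to party $\alpha$'s qubits; co-local subgroup $S_{\hat\alpha}=\{g\in S:g_\alpha=0\}$. $\mathrm{Tr}_\alpha$ is the partial trace over party $\alpha$'s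 qubits. *)

theory Defs
  imports Complex_Main "Jordan_Normal_Form.Matrix"
begin

text \<open>Elements of G^n = F_2^{2n}: pairs (a,b) of bit sequences, supported on qubits 0..n-1.
  Qubit k corresponds to bit k of a computational-basis index i < 2^n.\<close>

type_synonym pvec = "(nat \<Rightarrow> bool) \<times> (nat \<Rightarrow> bool)"

definition Gn :: "nat \<Rightarrow> pvec set" where
  "Gn n = {(a, b). \<forall>j\<ge>n. \<not> a j \<and> \<not> b j}"

definition pzero :: pvec where
  "pzero = (\<lambda>_. False, \<lambda>_. False)"

definition padd :: "pvec \<Rightarrow> pvec \<Rightarrow> pvec" where
  "padd f g = (\<lambda>j. fst f j \<noteq> fst g j, \<lambda>j. snd f j \<noteq> snd g j)"

definition symp :: "nat \<Rightarrow> pvec \<Rightarrow> pvec \<Rightarrow> bool" where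
  "symp n f g = odd (card {j. j < n \<and> fst f j \<and> snd g j} + card {j. j < n \<and> snd f j \<and> fst g j})"

definition f2_subspace :: "nat \<Rightarrow> pvec set \<Rightarrow> bool" where
  "f2_subspace n S \<longleftrightarrow> S \<subseteq> Gn n \<and> pzero \<in> S \<and> (\<forall>f\<in>S. \<forall>g\<in>S. padd f g \<in> S)"

definition self_dual :: "nat \<Rightarrow> pvec set \<Rightarrow> bool" where
  "self_dual n S \<longleftrightarrow> f2_subspace n S \<and> S = {f \<in> Gn n. \<forall>g\<in>S. \<not> symp n f g}"

inductive_set f2_span :: "pvec set \<Rightarrow> pvec set" for X where
  zero: "pzero \<in> f2_span X"
| add: "x \<in> X \<Longrightarrow> y \<in> f2_span X \<Longrightarrow> padd x y \<in> f2_span X"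

definition pauli1 :: "bool \<Rightarrow> bool \<Rightarrow> bool \<Rightarrow> bool \<Rightarrow> complex" where
  "pauli1 a b x y =
     (if \<not> a \<and> \<not> b then (if x = y then 1 else 0)
      else if a \<and> \<not> b then (if x \<noteq> y then 1 else 0)
      else if \<not> a \<and> b then (if x = y then (if x then -1 else 1) else 0)
      else (if x = y then 0 else (if x then \<i> else -\<i>)))"

definition pauli :: "nat \<Rightarrow> pvec \<Rightarrow> complex mat" where
  "pauli n f = mat (2^n) (2^n)
     (\<lambda>(i, j). \<Prod>k<n. pauli1 (fst f k) (snd f k) (bit i k) (bit j k))"

definition unit_vec_n :: "nat \<Rightarrow> complex vec \<Rightarrow> bool" where
  "unit_vec_n n \<psi> \<longleftrightarrow> dim_vec \<psi> = 2^n \<and> (\<Sum>i<2^n. (cmod (\<psi> $ i))\<^sup>2) = 1"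

definition stabilizer_state :: "nat \<Rightarrow> pvec set \<Rightarrow> complex vec \<Rightarrow> bool" where
  "stabilizer_state n S \<psi> \<longleftrightarrow> self_dual n S \<and> unit_vec_n n \<psi> \<and>
     (\<exists>\<epsilon> :: pvec \<Rightarrow> complex. \<forall>f\<in>S. (\<epsilon> f = 1 \<or> \<epsilon> f = -1) \<and> pauli n f *\<^sub>v \<psi> = \<epsilon> f \<cdot>\<^sub>v \<psi>)"

text \<open>Co-local subgroup S_{hat alpha}; qubit j belongs to party  part j.\<close>
definition colocal :: "nat \<Rightarrow> (nat \<Rightarrow> 'm) \<Rightarrow> pvec set \<Rightarrow> 'm \<Rightarrow> pvec set" where
  "colocal n part S \<alpha> = {g \<in> S. \<forall>j<n. part j = \<alpha> \<longrightarrow> \<not> fst g j \<and> \<not> snd g j}"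

definition S_loc :: "nat \<Rightarrow> (nat \<Rightarrow> 'm) \<Rightarrow> 'm set \<Rightarrow> pvec set \<Rightarrow> pvec set" where
  "S_loc n part M S = f2_span (\<Union>\<alpha>\<in>M. colocal n part S \<alpha>)"

definition proj :: "nat \<Rightarrow> complex vec \<Rightarrow> complex mat" where
  "proj n \<psi> = mat (2^n) (2^n) (\<lambda>(i, j). \<psi> $ i * cnj (\<psi> $ j))"

definition density_op :: "nat \<Rightarrow> complex mat \<Rightarrow> bool" where
  "density_op n \<rho> \<longleftrightarrow> \<rho> \<in> carrier_mat (2^n) (2^n) \<and>
     (\<forall>v :: nat \<Rightarrow> complex.
        let q = (\<Sum>i<2^n. \<Sum>j<2^n. cnj (v i) * \<rho> $$ (i, j) * v j) in Im q = 0 \<and> Re q \<ge> 0) \<and>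
     (\<Sum>i<2^n. \<rho> $$ (i, i)) = 1"

definition mix :: "nat \<Rightarrow> (nat \<Rightarrow> 'm) \<Rightarrow> 'm \<Rightarrow> nat \<Rightarrow> nat \<Rightarrow> nat" where
  "mix n part \<alpha> i k = (\<Sum>l<n. if (if part l = \<alpha> then bit k l else bit i l) then 2^l else 0)"

text \<open>Partial trace over party alpha's qubits, as a kernel indexed by the remaining bits of i, j
  (it depends only on the bits of i and j at qubits not belonging to alpha).\<close>
definition ptrace :: "nat \<Rightarrow> (nat \<Rightarrow> 'm) \<Rightarrow> 'm \<Rightarrow> complex mat \<Rightarrow> nat \<Rightarrow> nat \<Rightarrow> complex" where
  "ptrace n part \<alpha> \<rho> i j =
     (\<Sum>k\<in>{k. k < 2^n \<and> (\<forall>l<n. part l \<noteq> \<alpha> \<longrightarrow> \<not> bit k l)}.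
        \<rho> $$ (mix n part \<alpha> i k, mix n part \<alpha> j k))"

definition Gamma :: "nat \<Rightarrow> (nat \<Rightarrow> 'm) \<Rightarrow> 'm set \<Rightarrow> complex vec \<Rightarrow> complex mat set" where
  "Gamma n part M \<psi> = {\<rho>. density_op n \<rho> \<and>
     (\<forall>\<alpha>\<in>M. ptrace n part \<alpha> \<rho> = ptrace n part \<alpha> (proj n \<psi>))}"

end

theory Submission
  imports Defs
begin

text \<open>Let \<open>\<rho>\<close> have the same one-party marginals as \<open>|\<psi>\<rangle>\<langle>\<psi>|\<close>. An element \<open>g\<close> of the co-local
  subgroup of party \<open>\<alpha>\<close> acts trivially on the qubits of \<open>\<alpha>\<close>, so \<open>Tr(\<rho> \<sigma>(g))\<close> only depends on \<open>Tr\<^sub>\<alpha> \<rho>\<close> and equals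
  \<open>\<langle>\<psi>|\<sigma>(g)|\<psi>\<rangle> = \<epsilon>(g)\<close>. Since \<open>\<epsilon>(g) \<sigma>(g)\<close> is a Hermitian involution and \<open>\<rho> \<ge> 0\<close> has trace 1,
  this forces \<open>\<rho> \<epsilon>(g) \<sigma>(g) = \<rho>\<close>. These relations multiply along sums in \<open>S\<close>, so by
  \<open>S = S_loc\<close> they hold for every \<open>f \<in> S\<close>. Then each (conjugated) row of \<open>\<rho>\<close> is fixed by all
  \<open>\<epsilon>(f) \<sigma>(f)\<close>, hence a multiple of \<open>\<psi>\<close> because \<open>S\<close> is self-dual; hermiticity and
  \<open>Tr \<rho> = 1\<close> give \<open>\<rho> = |\<psi>\<rangle>\<langle>\<psi>|\<close>.\<close>

lemma sum_lessThan_single: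
  "i < (N::nat) \<Longrightarrow> (\<And>a. a < N \<Longrightarrow> a \<noteq> i \<Longrightarrow> h a = 0) \<Longrightarrow> (\<Sum>a<N. h a) = (h i :: 'a::comm_monoid_add)"
  by (subst sum.mono_neutral_cong_right[of "{..<N}" "{i}" h h]) auto

lemma sum_lessThan_mult_delta:
  "c < (N::nat) \<Longrightarrow> (\<Sum>b<N. f b * (if b = c then 1 else 0)) = (f c :: 'a::semiring_1)"
  by (subst sum_lessThan_single[of c]) auto

lemma sum_lessThan_delta_mult:
  "c < (N::nat) \<Longrightarrow> (\<Sum>b<N. (if c = b then 1 else 0) * f b) = (f c :: 'a::semiring_1)"
  by (subst sum_lessThan_single[of c]) auto

lemma bit_imp_less_of_less_pow2: "(p::nat) < 2 ^ n \<Longrightarrow> bit p k \<Longrightarrow> k < n"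
  by (metis bit_take_bit_iff take_bit_nat_eq_self_iff)

lemma eq_iff_bits_below:
  "(a::nat) < 2 ^ n \<Longrightarrow> c < 2 ^ n \<Longrightarrow> (\<forall>k<n. bit a k = bit c k) \<longleftrightarrow> a = c"
  by (metis bit_eq_iff bit_imp_less_of_less_pow2)

lemma sum_pow2_prod_bits:
  fixes F :: "nat \<Rightarrow> bool \<Rightarrow> 'a::comm_semiring_1"
  shows "(\<Sum>p<(2::nat) ^ n. \<Prod>k<n. F k (bit p k)) = (\<Prod>k<n. F k False + F k True)"
proof (induction n)
  case 0
  then show ?case by simp
next
  case (Suc n)
  have bit_high: "bit (p + 2 ^ n) k = (k = n \<or> bit p k)" if "p < 2 ^ n" "k \<le> n" for p k :: nat
  proof -
    have "bit (p + 2 ^ n) k = (bit p k \<or> bit ((2::nat) ^ n) k)"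
      by (rule bit_disjunctive_add_iff)
        (use bit_imp_less_of_less_pow2[OF that(1)] in \<open>auto simp: bit_exp_iff\<close>)
    then show ?thesis
      using that bit_imp_less_of_less_pow2[OF that(1)] by (auto simp: bit_exp_iff)
  qed
  have split: "{..<(2::nat) ^ Suc n} = {..<2 ^ n} \<union> (\<lambda>p. p + 2 ^ n) ` {..<2 ^ n}"
  proof -
    have "{(2::nat) ^ n..<2 ^ n + 2 ^ n} = (\<lambda>p. p + 2 ^ n) ` {..<2 ^ n}"
      by (simp add: image_add_atLeastLessThan' lessThan_atLeast0)
    moreover have "{..<(2::nat) ^ Suc n} = {..<2 ^ n} \<union> {2 ^ n..<2 ^ n + 2 ^ n}" by auto
    ultimately show ?thesis by simp
  qed
  have "(\<Sum>p<(2::nat) ^ Suc n. \<Prod>k<Suc n. F k (bit p k))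
      = (\<Sum>p<(2::nat) ^ n. \<Prod>k<Suc n. F k (bit p k))
        + (\<Sum>p<(2::nat) ^ n. \<Prod>k<Suc n. F k (bit (p + 2 ^ n) k))"
    unfolding split by (subst sum.union_disjoint) (auto simp: sum.reindex inj_on_def)
  also have "(\<Sum>p<(2::nat) ^ n. \<Prod>k<Suc n. F k (bit p k))
      = (\<Sum>p<(2::nat) ^ n. \<Prod>k<n. F k (bit p k)) * F n False"
    unfolding sum_distrib_right
    by (intro sum.cong refl) (use bit_imp_less_of_less_pow2[of _ n n] in fastforce)
  also have "(\<Sum>p<(2::nat) ^ n. \<Prod>k<Suc n. F k (bit (p + 2 ^ n) k))
      = (\<Sum>p<(2::nat) ^ n. \<Prod>k<n. F k (bit p k)) * F n True"
    unfolding sum_distrib_right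
    by (intro sum.cong refl) (auto simp: bit_high intro!: prod.cong)
  finally show ?case
    using Suc by (simp add: distrib_left)
qed

lemma prod_lessThan_if_const:
  "(\<Prod>k<(n::nat). if P k then (c::'a::comm_semiring_1) else 0) = (if \<forall>k<n. P k then c ^ n else 0)"
  by (induction n) (auto simp: less_Suc_eq mult.commute)

lemma prod_lessThan_sign:
  "(\<Prod>k<(n::nat). if P k then -1 else (1::'a::comm_ring_1)) = (-1) ^ card {k. k < n \<and> P k}"
proof (induction n)
  case 0
  then show ?case by simp
next
  case (Suc n)
  have "{k. k < Suc n \<and> P k} = (if P n then insert n else id) {k. k < n \<and> P k}"
    by (auto simp: less_Suc_eq)
  then show ?case
    using Suc by simp
qed

section \<open>Pauli operators\<close>

text \<open>\<open>\<sigma>(a, b) \<sigma>(a', b') = pauli1_phase a b a' b' \<cdot> \<sigma>(a + a', b + b')\<close>, by \<open>XZ = -iY\<close>, \<open>ZY = -iX\<close> and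
  \<open>YX = -iZ\<close>.\<close>
definition pauli1_phase :: "bool \<Rightarrow> bool \<Rightarrow> bool \<Rightarrow> bool \<Rightarrow> complex" where
  "pauli1_phase a b a' b' =
     (if (\<not> a \<and> \<not> b) \<or> (\<not> a' \<and> \<not> b') \<or> (a = a' \<and> b = b') then 1
      else if (a \<and> \<not> b \<and> \<not> a' \<and> b') \<or> (\<not> a \<and> b \<and> a' \<and> b') \<or> (a \<and> b \<and> a' \<and> \<not> b') then -\<i>
      else \<i>)"

lemma pauli1_cnj: "cnj (pauli1 a b x y) = pauli1 a b y x"
  by (cases a; cases b; cases x; cases y; simp add: pauli1_def)

lemma pauli1_mult:
  "pauli1 a b x False * pauli1 a' b' False z + pauli1 a b x True * pauli1 a' b' True z
     = pauli1_phase a b a' b' * pauli1 (a \<noteq> a') (b \<noteq> b') x z"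
  by (cases a; cases b; cases a'; cases b'; cases x; cases z; simp add: pauli1_def pauli1_phase_def)

lemma pauli1_phase_swap:
  "pauli1_phase a b a' b' = (if (a \<and> b') \<noteq> (b \<and> a') then -1 else 1) * pauli1_phase a' b' a b"
  by (cases a; cases b; cases a'; cases b'; simp add: pauli1_phase_def)

lemma pauli1_phase_self: "pauli1_phase a b a b = 1"
  by (simp add: pauli1_phase_def)

lemma pauli1_completeness:
  "(\<Sum>a\<in>UNIV. \<Sum>b\<in>UNIV. cnj (pauli1 a b x y) * pauli1 a b i j) = (if i = x \<and> j = y then 2 else 0)"
  by (cases x; cases y; cases i; cases j; simp add: pauli1_def UNIV_bool)

definition pauli_kernel :: "nat \<Rightarrow> pvec \<Rightarrow> nat \<Rightarrow> nat \<Rightarrow> complex" where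
  "pauli_kernel n f i j = (\<Prod>k<n. pauli1 (fst f k) (snd f k) (bit i k) (bit j k))"

definition pauli_phase :: "nat \<Rightarrow> pvec \<Rightarrow> pvec \<Rightarrow> complex" where
  "pauli_phase n f g = (\<Prod>k<n. pauli1_phase (fst f k) (snd f k) (fst g k) (snd g k))"

lemma pauli_kernel_mult:
  "(\<Sum>b<(2::nat) ^ n. pauli_kernel n f a b * pauli_kernel n g b c)
     = pauli_phase n f g * pauli_kernel n (padd f g) a c"
proof -
  have "(\<Sum>b<(2::nat) ^ n. pauli_kernel n f a b * pauli_kernel n g b c)
     = (\<Sum>b<(2::nat) ^ n. \<Prod>k<n. pauli1 (fst f k) (snd f k) (bit a k) (bit b k)
                                 * pauli1 (fst g k) (snd g k) (bit b k) (bit c k))"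
    by (simp add: pauli_kernel_def prod.distrib)
  also have "\<dots> = (\<Prod>k<n. pauli1_phase (fst f k) (snd f k) (fst g k) (snd g k)
                         * pauli1 (fst (padd f g) k) (snd (padd f g) k) (bit a k) (bit c k))"
    by (subst sum_pow2_prod_bits) (simp add: pauli1_mult padd_def)
  also have "\<dots> = pauli_phase n f g * pauli_kernel n (padd f g) a c"
    by (simp add: pauli_phase_def pauli_kernel_def prod.distrib)
  finally show ?thesis .
qed

lemma pauli_kernel_cnj: "cnj (pauli_kernel n f i j) = pauli_kernel n f j i"
  unfolding pauli_kernel_def cnj_prod by (intro prod.cong refl) (simp add: pauli1_cnj)

lemma pauli_kernel_pzero:
  assumes "a < 2 ^ n" "c < 2 ^ n"
  shows "pauli_kernel n pzero a c = (if a = c then 1 else 0)"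
proof -
  have "pauli_kernel n pzero a c = (\<Prod>k<n. if bit a k = bit c k then 1 else 0)"
    by (simp add: pauli_kernel_def pzero_def pauli1_def)
  then show ?thesis
    using eq_iff_bits_below[OF assms] by (simp add: prod_lessThan_if_const)
qed

lemma padd_self: "padd f f = pzero"
  by (simp add: padd_def pzero_def)

lemma pauli_phase_self: "pauli_phase n f f = 1"
  by (simp add: pauli_phase_def pauli1_phase_self)

lemma pauli_phase_swap: "pauli_phase n f g = (if symp n f g then -1 else 1) * pauli_phase n g f"
proof -
  let ?X = "\<lambda>k. fst f k \<and> snd g k" and ?Y = "\<lambda>k. snd f k \<and> fst g k"
  have "pauli_phase n f g = (\<Prod>k<n. ((if ?X k then -1 else 1) * (if ?Y k then -1 else 1))
                                 * pauli1_phase (fst g k) (snd g k) (fst f k) (snd f k))"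
    unfolding pauli_phase_def by (intro prod.cong refl) (subst pauli1_phase_swap, auto)
  also have "\<dots> = (-1) ^ card {k. k < n \<and> ?X k} * (-1) ^ card {k. k < n \<and> ?Y k} * pauli_phase n g f"
    by (simp add: prod.distrib pauli_phase_def prod_lessThan_sign)
  also have "(-1::complex) ^ card {k. k < n \<and> ?X k} * (-1) ^ card {k. k < n \<and> ?Y k}
           = (if symp n f g then -1 else 1)"
    by (simp add: symp_def power_add[symmetric] minus_one_power_iff)
  finally show ?thesis .
qed

lemma bits_in_Gn: "(p::nat) < 2 ^ n \<Longrightarrow> (q::nat) < 2 ^ n \<Longrightarrow> (bit p, bit q) \<in> Gn n"
  unfolding Gn_def using bit_imp_less_of_less_pow2[of p n] bit_imp_less_of_less_pow2[of q n]
  by (auto simp: not_less[symmetric])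

text \<open>Orthogonality of the Pauli basis; \<open>(bit p, bit q)\<close> enumerates \<open>Gn n\<close> as \<open>p, q\<close> range
  below \<open>2^n\<close>.\<close>
lemma pauli_kernel_completeness:
  assumes "i < 2 ^ n" "j < 2 ^ n" "x < 2 ^ n" "y < 2 ^ n"
  shows "(\<Sum>p<(2::nat) ^ n. \<Sum>q<(2::nat) ^ n.
            cnj (pauli_kernel n (bit p, bit q) x y) * pauli_kernel n (bit p, bit q) i j)
         = (if i = x \<and> j = y then 2 ^ n else 0)"
proof -
  define G where "G k a b = cnj (pauli1 a b (bit x k) (bit y k)) * pauli1 a b (bit i k) (bit j k)"
    for k a b
  have "(\<Sum>p<(2::nat) ^ n. \<Sum>q<(2::nat) ^ n.
            cnj (pauli_kernel n (bit p, bit q) x y) * pauli_kernel n (bit p, bit q) i j)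
      = (\<Sum>p<(2::nat) ^ n. \<Sum>q<(2::nat) ^ n. \<Prod>k<n. G k (bit p k) (bit q k))"
    by (simp add: pauli_kernel_def G_def prod.distrib)
  also have "\<dots> = (\<Sum>p<(2::nat) ^ n. \<Prod>k<n. G k (bit p k) False + G k (bit p k) True)"
    by (subst sum_pow2_prod_bits) simp
  also have "\<dots> = (\<Prod>k<n. (G k False False + G k False True) + (G k True False + G k True True))"
    by (subst sum_pow2_prod_bits) simp
  also have "\<dots> = (\<Prod>k<n. if bit i k = bit x k \<and> bit j k = bit y k then 2 else 0)"
    unfolding G_def using pauli1_completeness[unfolded UNIV_bool] by (intro prod.cong refl) (simp add: add.assoc)
  also have "\<dots> = (if i = x \<and> j = y then 2 ^ n else 0)"
    using eq_iff_bits_below[OF assms(1,3)] eq_iff_bits_below[OF assms(2,4)]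
    by (simp add: prod_lessThan_if_const) blast
  finally show ?thesis .
qed

definition pauli_apply :: "nat \<Rightarrow> pvec \<Rightarrow> (nat \<Rightarrow> complex) \<Rightarrow> nat \<Rightarrow> complex" where
  "pauli_apply n f v i = (\<Sum>j<(2::nat) ^ n. pauli_kernel n f i j * v j)"

lemma pauli_mult_mat_vec:
  assumes "dim_vec v = 2 ^ n" "i < 2 ^ n"
  shows "(pauli n f *\<^sub>v v) $ i = pauli_apply n f (\<lambda>j. v $ j) i"
  using assms by (simp add: pauli_def pauli_apply_def scalar_prod_def pauli_kernel_def atLeast0LessThan)

lemma pauli_apply_cong: "(\<And>j. j < 2 ^ n \<Longrightarrow> u j = v j) \<Longrightarrow> pauli_apply n f u i = pauli_apply n f v i"
  unfolding pauli_apply_def by (intro sum.cong) auto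

lemma pauli_apply_scale: "pauli_apply n f (\<lambda>j. c * v j) i = c * pauli_apply n f v i"
  by (simp add: pauli_apply_def sum_distrib_left mult_ac)

lemma pauli_apply_diff: "pauli_apply n f (\<lambda>j. u j - v j) i = pauli_apply n f u i - pauli_apply n f v i"
  by (simp add: pauli_apply_def sum_subtractf right_diff_distrib)

lemma pauli_apply_pauli_apply:
  "pauli_apply n f (pauli_apply n g v) i = pauli_phase n f g * pauli_apply n (padd f g) v i"
proof -
  have "pauli_apply n f (pauli_apply n g v) i
      = (\<Sum>k<(2::nat) ^ n. (\<Sum>j<(2::nat) ^ n. pauli_kernel n f i j * pauli_kernel n g j k) * v k)"
    unfolding pauli_apply_def sum_distrib_left sum_distrib_right
    by (subst sum.swap) (simp add: mult.assoc)
  then show ?thesis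
    by (simp add: pauli_kernel_mult pauli_apply_def sum_distrib_left mult.assoc)
qed

lemma pauli_apply_anticommute:
  "symp n f g \<Longrightarrow> pauli_apply n f (pauli_apply n g v) i = - pauli_apply n g (pauli_apply n f v) i"
  by (simp add: pauli_apply_pauli_apply pauli_phase_swap[of n f g] padd_def conj_commute eq_commute)

lemma pauli_apply_adjoint:
  "(\<Sum>i<(2::nat) ^ n. cnj (u i) * pauli_apply n f v i) = (\<Sum>j<(2::nat) ^ n. cnj (pauli_apply n f u j) * v j)"
  unfolding pauli_apply_def sum_distrib_left sum_distrib_right cnj_sum
  by (subst sum.swap) (simp add: pauli_kernel_cnj mult_ac)

text \<open>Completeness of the Pauli basis: a vector \<open>z\<close> is determined by the matrix elements
  \<open>\<langle>u, \<sigma>(f) z\<rangle>\<close> for all \<open>f\<close>, as soon as \<open>u x \<noteq> 0\<close>.\<close>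
lemma pauli_apply_completeness:
  assumes x: "x < 2 ^ n" and y: "y < 2 ^ n"
  shows "(\<Sum>p<(2::nat) ^ n. \<Sum>q<(2::nat) ^ n. cnj (pauli_kernel n (bit p, bit q) x y)
            * (\<Sum>i<(2::nat) ^ n. cnj (u i) * pauli_apply n (bit p, bit q) z i))
         = 2 ^ n * cnj (u x) * z y"
proof -
  let ?\<sigma> = "\<lambda>p q. pauli_kernel n (bit p, bit q)"
  have "(\<Sum>p<(2::nat) ^ n. \<Sum>q<(2::nat) ^ n. cnj (?\<sigma> p q x y)
            * (\<Sum>i<(2::nat) ^ n. cnj (u i) * pauli_apply n (bit p, bit q) z i))
      = (\<Sum>i<(2::nat) ^ n. \<Sum>j<(2::nat) ^ n. cnj (u i) * z j
            * (\<Sum>p<(2::nat) ^ n. \<Sum>q<(2::nat) ^ n. cnj (?\<sigma> p q x y) * ?\<sigma> p q i j))"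
    unfolding pauli_apply_def sum_distrib_left
    by (subst (1 2) sum.swap, subst (2 3) sum.swap, subst (3) sum.swap) (simp add: mult_ac, rule sum.swap)
  also have "\<dots> = (\<Sum>i<(2::nat) ^ n. \<Sum>j<(2::nat) ^ n. cnj (u i) * z j * (if i = x \<and> j = y then 2 ^ n else 0))"
    by (intro sum.cong refl) (simp add: pauli_kernel_completeness x y)
  also have "\<dots> = (\<Sum>j<(2::nat) ^ n. cnj (u x) * z j * (if j = y then 2 ^ n else 0))"
    by (subst sum_lessThan_single[OF x]) auto
  also have "\<dots> = 2 ^ n * cnj (u x) * z y"
    by (subst sum_lessThan_single[OF y]) auto
  finally show ?thesis .
qed

section \<open>Partial traces\<close>

lemma bit_sum_pow2:
  "bit (\<Sum>l<n. if Q l then (2::nat) ^ l else 0) m \<longleftrightarrow> m < n \<and> Q m"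
  "(\<Sum>l<n. if Q l then (2::nat) ^ l else 0) < 2 ^ n"
proof (induction n arbitrary: m)
  case (Suc n)
  define s where "s = (\<Sum>l<n. if Q l then (2::nat) ^ l else 0)"
  have s: "s < 2 ^ n" "\<And>m. bit s m \<longleftrightarrow> m < n \<and> Q m"
    using Suc unfolding s_def by auto
  have sum_Suc: "(\<Sum>l<Suc n. if Q l then (2::nat) ^ l else 0) = s + (if Q n then 2 ^ n else 0)"
    by (simp add: s_def)
  have bit_add: "bit (s + (if Q n then 2 ^ n else 0)) m \<longleftrightarrow> bit s m \<or> bit (if Q n then (2::nat) ^ n else 0) m" for m
    by (rule bit_disjunctive_add_iff) (auto simp: s bit_exp_iff)
  { case 1 show ?case unfolding sum_Suc bit_add using s by (auto simp: bit_exp_iff less_Suc_eq) }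
  { case 2 show ?case unfolding sum_Suc using s by auto }
qed simp_all

lemma mix_bit: "bit (mix n part \<alpha> i k) l \<longleftrightarrow> l < n \<and> (if part l = \<alpha> then bit k l else bit i l)"
  unfolding mix_def by (rule bit_sum_pow2(1))

lemma mix_less: "mix n part \<alpha> i k < 2 ^ n"
  unfolding mix_def by (rule bit_sum_pow2(2))

lemma bij_betw_mix:
  fixes n :: nat and part :: "nat \<Rightarrow> 'm" and \<alpha> :: 'm
  defines "K \<equiv> {k. k < 2 ^ n \<and> (\<forall>l<n. part l \<noteq> \<alpha> \<longrightarrow> \<not> bit k l)}"
    and "R \<equiv> {i. i < 2 ^ n \<and> (\<forall>l<n. part l = \<alpha> \<longrightarrow> \<not> bit i l)}"
  shows "bij_betw (\<lambda>(k, i, j). (mix n part \<alpha> i k, mix n part \<alpha> j k)) (K \<times> R \<times> R)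
           {(I, J). I < 2 ^ n \<and> J < 2 ^ n \<and> (\<forall>l<n. part l = \<alpha> \<longrightarrow> bit I l = bit J l)}"
proof (rule bij_betw_byWitness[where f' = "\<lambda>(I, J). (mix n part \<alpha> 0 I, mix n part \<alpha> I 0, mix n part \<alpha> J 0)"])
  have K_bit: "l < n \<and> part l = \<alpha>" if "k \<in> K" "bit k l" for k l
    using that bit_imp_less_of_less_pow2[of k n l] by (auto simp: K_def)
  have R_bit: "l < n \<and> part l \<noteq> \<alpha>" if "i \<in> R" "bit i l" for i l
    using that bit_imp_less_of_less_pow2[of i n l] by (auto simp: R_def)
  show "\<forall>x\<in>K \<times> R \<times> R. (\<lambda>(I, J). (mix n part \<alpha> 0 I, mix n part \<alpha> I 0, mix n part \<alpha> J 0))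
          ((\<lambda>(k, i, j). (mix n part \<alpha> i k, mix n part \<alpha> j k)) x) = x"
    by (auto simp: bit_eq_iff mix_bit dest: K_bit R_bit)
  show "\<forall>x\<in>{(I, J). I < 2 ^ n \<and> J < 2 ^ n \<and> (\<forall>l<n. part l = \<alpha> \<longrightarrow> bit I l = bit J l)}.
          (\<lambda>(k, i, j). (mix n part \<alpha> i k, mix n part \<alpha> j k))
            ((\<lambda>(I, J). (mix n part \<alpha> 0 I, mix n part \<alpha> I 0, mix n part \<alpha> J 0)) x) = x"
    by (auto simp: bit_eq_iff mix_bit dest: bit_imp_less_of_less_pow2)
qed (auto simp: K_def R_def mix_less mix_bit)

text \<open>If \<open>g\<close> acts trivially on the qubits of party \<open>\<alpha>\<close>, the kernel of \<open>\<sigma>(g)\<close> vanishes unless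
  both indices agree on those qubits, and it does not depend on them otherwise; hence
  \<open>Tr(\<sigma>(g) A)\<close> only depends on \<open>Tr\<^sub>\<alpha> A\<close>.\<close>
lemma trace_pauli_mult_ptrace_cong:
  fixes A B :: "complex mat"
  assumes g: "\<forall>j<n. part j = \<alpha> \<longrightarrow> \<not> fst g j \<and> \<not> snd g j"
    and ptrace_eq: "ptrace n part \<alpha> A = ptrace n part \<alpha> B"
  shows "(\<Sum>i<(2::nat) ^ n. \<Sum>j<(2::nat) ^ n. pauli_kernel n g i j * A $$ (j, i))
       = (\<Sum>i<(2::nat) ^ n. \<Sum>j<(2::nat) ^ n. pauli_kernel n g i j * B $$ (j, i))"
proof -
  define K where "K = {k. k < (2::nat) ^ n \<and> (\<forall>l<n. part l \<noteq> \<alpha> \<longrightarrow> \<not> bit k l)}"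
  define R where "R = {i. i < (2::nat) ^ n \<and> (\<forall>l<n. part l = \<alpha> \<longrightarrow> \<not> bit i l)}"
  define D where "D = {(I, J). I < (2::nat) ^ n \<and> J < (2::nat) ^ n \<and> (\<forall>l<n. part l = \<alpha> \<longrightarrow> bit I l = bit J l)}"
  have D_sub: "D \<subseteq> {..<2 ^ n} \<times> {..<2 ^ n}"
    by (auto simp: D_def)
  have kernel_mix: "pauli_kernel n g (mix n part \<alpha> i k) (mix n part \<alpha> j k) = pauli_kernel n g i j"
    if "i \<in> R" "j \<in> R" for i j k :: nat
    unfolding pauli_kernel_def using that g
    by (intro prod.cong refl) (auto simp: mix_bit R_def pauli1_def)
  have kernel_zero: "pauli_kernel n g I J = 0" if "(I, J) \<notin> D" "I < 2 ^ n" "J < 2 ^ n" for I J :: nat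
  proof -
    have "\<not> (\<forall>l<n. part l = \<alpha> \<longrightarrow> bit I l = bit J l)"
      using that by (simp add: D_def)
    then obtain l where l: "l < n" "part l = \<alpha>" "bit I l \<noteq> bit J l"
      by blast
    then have "pauli1 (fst g l) (snd g l) (bit I l) (bit J l) = 0"
      using g by (auto simp: pauli1_def)
    then show ?thesis
      unfolding pauli_kernel_def using l(1) by (intro prod_zero) auto
  qed
  have "(\<Sum>i<(2::nat) ^ n. \<Sum>j<(2::nat) ^ n. pauli_kernel n g i j * C $$ (j, i))
      = (\<Sum>i\<in>R. \<Sum>j\<in>R. pauli_kernel n g i j * ptrace n part \<alpha> C j i)" for C :: "complex mat"
  proof -
    let ?F = "\<lambda>(I, J). pauli_kernel n g I J * C $$ (J, I)"
    have "(\<Sum>i<(2::nat) ^ n. \<Sum>j<(2::nat) ^ n. pauli_kernel n g i j * C $$ (j, i))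
        = (\<Sum>x\<in>{..<(2::nat) ^ n} \<times> {..<2 ^ n}. ?F x)"
      by (simp add: sum.cartesian_product)
    also have "\<dots> = sum ?F D"
      using D_sub by (intro sum.mono_neutral_right) (auto simp: kernel_zero)
    also have "\<dots> = (\<Sum>(k, i, j)\<in>K \<times> R \<times> R. ?F (mix n part \<alpha> i k, mix n part \<alpha> j k))"
      using bij_betw_mix[of n part \<alpha>] unfolding K_def R_def D_def
      by (subst sum.reindex_bij_betw[symmetric]) (auto simp: case_prod_beta)
    also have "\<dots> = (\<Sum>k\<in>K. \<Sum>i\<in>R. \<Sum>j\<in>R. pauli_kernel n g i j * C $$ (mix n part \<alpha> j k, mix n part \<alpha> i k))"
      by (simp add: sum.cartesian_product[symmetric] kernel_mix)
    also have "\<dots> = (\<Sum>i\<in>R. \<Sum>j\<in>R. \<Sum>k\<in>K. pauli_kernel n g i j * C $$ (mix n part \<alpha> j k, mix n part \<alpha> i k))"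
      by (subst sum.swap, subst (2) sum.swap) simp
    also have "\<dots> = (\<Sum>i\<in>R. \<Sum>j\<in>R. pauli_kernel n g i j * ptrace n part \<alpha> C j i)"
      by (simp add: ptrace_def K_def sum_distrib_left)
    finally show ?thesis .
  qed
  then show ?thesis
    using ptrace_eq by simp
qed

section \<open>Positive semidefinite kernels\<close>

definition quad_form :: "nat \<Rightarrow> (nat \<Rightarrow> nat \<Rightarrow> complex) \<Rightarrow> (nat \<Rightarrow> complex) \<Rightarrow> complex" where
  "quad_form N r v = (\<Sum>i<N. \<Sum>j<N. cnj (v i) * r i j * v j)"

definition psd_kernel :: "nat \<Rightarrow> (nat \<Rightarrow> nat \<Rightarrow> complex) \<Rightarrow> bool" where
  "psd_kernel N r \<longleftrightarrow> (\<forall>v. Im (quad_form N r v) = 0 \<and> Re (quad_form N r v) \<ge> 0)"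

lemma density_op_psd_kernel: "density_op n \<rho> \<Longrightarrow> psd_kernel (2 ^ n) (\<lambda>i j. \<rho> $$ (i, j))"
  unfolding density_op_def psd_kernel_def quad_form_def Let_def by blast

lemma quad_form_unit: "i < N \<Longrightarrow> quad_form N r (\<lambda>a. if a = i then c else 0) = cnj c * r i i * c"
  unfolding quad_form_def by (subst (1 2) sum_lessThan_single[of i]) auto

lemma quad_form_pair:
  assumes "i < N" "j < N" "i \<noteq> j"
  shows "quad_form N r (\<lambda>a. if a = i then 1 else if a = j then c else 0)
         = r i i + r i j * c + cnj c * r j i + cnj c * r j j * c"
proof -
  have pair: "(\<Sum>a<N. h a) = h i + h j" if "\<And>a. a \<noteq> i \<Longrightarrow> a \<noteq> j \<Longrightarrow> h a = 0" for h :: "nat \<Rightarrow> complex"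
    using assms that by (subst sum.mono_neutral_cong_right[of "{..<N}" "{i, j}" h h]) auto
  define v where "v a = (if a = i then 1 else if a = j then c else 0)" for a
  have "quad_form N r v = (\<Sum>a<N. cnj (v a) * r a i * v i + cnj (v a) * r a j * v j)"
    unfolding quad_form_def by (intro sum.cong refl pair) (auto simp: v_def)
  also have "\<dots> = r i i + r i j * c + cnj c * r j i + cnj c * r j j * c"
    using assms by (subst pair) (auto simp: v_def algebra_simps)
  finally show ?thesis
    unfolding v_def .
qed

lemma psd_kernel_diag:
  assumes "psd_kernel N r" "i < N"
  shows "Im (r i i) = 0" "Re (r i i) \<ge> 0"
  using assms quad_form_unit[of i N r 1] unfolding psd_kernel_def by (metis complex_cnj_one mult_1 mult_1_right)+

lemma psd_kernel_cnj:
  assumes p: "psd_kernel N r" and ij: "i < N" "j < N"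
  shows "cnj (r i j) = r j i"
proof (cases "i = j")
  case True
  then show ?thesis
    using psd_kernel_diag[OF p ij(1)] by (simp add: complex_eq_iff)
next
  case False
  have real: "Im (quad_form N r (\<lambda>a. if a = i then 1 else if a = j then c else 0)) = 0" for c
    using p unfolding psd_kernel_def by blast
  have "Im (r i j + r j i) = 0" "Re (r i j - r j i) = 0"
    using real[of 1] real[of \<i>] quad_form_pair[OF ij False, of r 1] quad_form_pair[OF ij False, of r \<i>]
      psd_kernel_diag[OF p ij(1)] psd_kernel_diag[OF p ij(2)] by simp_all
  then show ?thesis
    by (simp add: complex_eq_iff)
qed

lemma quad_form_add_unit:
  assumes p: "psd_kernel N r" and a: "a < N"
  shows "quad_form N r (\<lambda>b. w b + (if b = a then t else 0))
         = quad_form N r w + cnj t * (\<Sum>b<N. r a b * w b) + t * cnj (\<Sum>b<N. r a b * w b) + cnj t * r a a * t"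
proof -
  let ?e = "\<lambda>i. if i = a then t else 0"
  have "quad_form N r (\<lambda>b. w b + ?e b)
      = quad_form N r w + (\<Sum>i<N. \<Sum>j<N. cnj (w i) * r i j * ?e j)
        + (\<Sum>i<N. \<Sum>j<N. cnj (?e i) * r i j * w j) + (\<Sum>i<N. \<Sum>j<N. cnj (?e i) * r i j * ?e j)"
  proof -
    have expand: "cnj (x + u) * c * (y + v) = cnj x * c * y + cnj x * c * v + cnj u * c * y + cnj u * c * v"
      for x y u v c :: complex
      by (simp add: algebra_simps)
    show ?thesis
      unfolding quad_form_def expand by (simp only: sum.distrib)
  qed
  also have "(\<Sum>i<N. \<Sum>j<N. cnj (w i) * r i j * ?e j) = (\<Sum>i<N. cnj (w i) * r i a * t)"
    by (intro sum.cong refl, subst sum_lessThan_single[OF a]) auto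
  also have "\<dots> = t * cnj (\<Sum>b<N. r a b * w b)"
    by (simp add: sum_distrib_left psd_kernel_cnj[OF p a] mult_ac)
  also have "(\<Sum>i<N. \<Sum>j<N. cnj (?e i) * r i j * w j) = cnj t * (\<Sum>b<N. r a b * w b)"
    by (subst sum_lessThan_single[OF a]) (auto simp: sum_distrib_left mult.assoc)
  also have "(\<Sum>i<N. \<Sum>j<N. cnj (?e i) * r i j * ?e j) = cnj t * r a a * t"
    by (subst sum_lessThan_single[OF a], simp, subst sum_lessThan_single[OF a]) auto
  finally show ?thesis
    by (simp only: ac_simps)
qed

text \<open>A vector isotropic for a positive semidefinite kernel lies in its null space: otherwise
  moving it by a small multiple of \<open>z = (r w) a\<close> along the \<open>a\<close>-th axis makes the form negative.\<close>
lemma psd_kernel_isotropic_null: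
  assumes p: "psd_kernel N r" and a: "a < N" and iso: "quad_form N r w = 0"
  shows "(\<Sum>b<N. r a b * w b) = 0"
proof -
  define z where "z = (\<Sum>b<N. r a b * w b)"
  define d where "d = Re (r a a)"
  have d: "r a a = complex_of_real d" "d \<ge> 0"
    using psd_kernel_diag[OF p a] by (simp_all add: d_def complex_eq_iff)
  define s :: real where "s = 1 / (d + 1)"
  have s: "s > 0" "s * d - 2 < 0"
    using d(2) by (simp_all add: s_def field_simps)
  define t where "t = - complex_of_real s * z"
  have "quad_form N r (\<lambda>b. w b + (if b = a then t else 0)) = cnj t * z + t * cnj z + cnj t * r a a * t"
    using quad_form_add_unit[OF p a, of w t] iso by (simp add: z_def)
  also have "\<dots> = complex_of_real (s * (s * d - 2)) * (z * cnj z)"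
    by (simp add: t_def d algebra_simps)
  also have "\<dots> = complex_of_real (s * (s * d - 2) * (cmod z)\<^sup>2)"
    unfolding complex_norm_square[symmetric] by simp
  finally have "s * (s * d - 2) * (cmod z)\<^sup>2 \<ge> 0"
    using p unfolding psd_kernel_def by (metis Re_complex_of_real)
  moreover have "s * (s * d - 2) < 0"
    using s by (simp add: mult_pos_neg)
  ultimately have "(cmod z)\<^sup>2 \<le> 0"
    by (meson mult_neg_pos not_le)
  then show ?thesis
    by (simp add: z_def)
qed

text \<open>If \<open>Tr(r Q) = 0\<close> for an orthogonal projector \<open>Q\<close>, the columns of \<open>Q\<close> are isotropic
  for \<open>r\<close>, since their quadratic forms are nonnegative and sum to \<open>Tr(Q r Q) = Tr(r Q)\<close>.\<close>
lemma psd_kernel_trace_projector_zero: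
  assumes p: "psd_kernel N r"
    and Q_cnj: "\<And>i j. cnj (Q i j) = Q j i"
    and Q_idem: "\<And>a b. a < N \<Longrightarrow> b < N \<Longrightarrow> (\<Sum>c<N. Q a c * Q c b) = Q a b"
    and trace: "(\<Sum>i<N. \<Sum>j<N. r i j * Q j i) = 0"
    and a: "a < N" and c: "c < N"
  shows "(\<Sum>b<N. r a b * Q b c) = 0"
proof -
  have "(\<Sum>c<N. quad_form N r (\<lambda>b. Q b c)) = (\<Sum>c<N. \<Sum>i<N. \<Sum>j<N. r i j * (Q j c * Q c i))"
    unfolding quad_form_def by (intro sum.cong refl) (simp add: Q_cnj mult_ac)
  also have "\<dots> = (\<Sum>i<N. \<Sum>c<N. \<Sum>j<N. r i j * (Q j c * Q c i))"
    by (rule sum.swap)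
  also have "\<dots> = (\<Sum>i<N. \<Sum>j<N. r i j * (\<Sum>c<N. Q j c * Q c i))"
    by (rule sum.cong[OF refl], simp add: sum_distrib_left, rule sum.swap)
  also have "\<dots> = 0"
    using trace by (simp add: Q_idem)
  finally have sum_zero: "(\<Sum>c<N. quad_form N r (\<lambda>b. Q b c)) = 0" .
  have "Re (quad_form N r (\<lambda>b. Q b c')) \<ge> 0" "Im (quad_form N r (\<lambda>b. Q b c')) = 0" for c'
    using p unfolding psd_kernel_def by auto
  moreover from this have "Re (quad_form N r (\<lambda>b. Q b c)) = 0"
    using arg_cong[OF sum_zero, of Re] c by (simp add: Re_sum sum_nonneg_eq_0_iff)
  ultimately have "quad_form N r (\<lambda>b. Q b c) = 0"
    by (simp add: complex_eq_iff)
  then show ?thesis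
    by (rule psd_kernel_isotropic_null[OF p a])
qed

lemma involution_half_complement_idem:
  fixes P :: "nat \<Rightarrow> nat \<Rightarrow> complex"
  assumes P_sq: "\<And>a c. a < N \<Longrightarrow> c < N \<Longrightarrow> (\<Sum>b<N. P a b * P b c) = (if a = c then 1 else 0)"
    and b: "b < N" and a: "a < N"
  shows "(\<Sum>c<N. ((if b = c then 1 else 0) - P b c) / 2 * (((if c = a then 1 else 0) - P c a) / 2))
         = ((if b = a then 1 else 0) - P b a) / 2"
proof -
  have "(\<Sum>c<N. ((if b = c then 1 else 0) - P b c) / 2 * (((if c = a then 1 else 0) - P c a) / 2))
      = (\<Sum>c<N. ((if b = c then 1 else 0) * (if c = a then 1 else 0)
         - (if b = c then 1 else 0) * P c a - P b c * (if c = a then 1 else 0) + P b c * P c a) / 4)"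
    by (intro sum.cong refl) (simp add: algebra_simps)
  also have "\<dots> = ((\<Sum>c<N. (if b = c then 1 else 0) * (if c = a then 1 else 0))
         - (\<Sum>c<N. (if b = c then 1 else 0) * P c a) - (\<Sum>c<N. P b c * (if c = a then 1 else 0))
         + (\<Sum>c<N. P b c * P c a)) / 4"
    by (simp add: sum_divide_distrib[symmetric] sum.distrib sum_subtractf)
  also have "\<dots> = ((if b = a then 1 else 0) - P b a - P b a + (if b = a then 1 else 0)) / 4"
    using sum_lessThan_delta_mult[OF b, of "\<lambda>c. if c = a then 1 else 0"]
      sum_lessThan_delta_mult[OF b, of "\<lambda>c. P c a"] sum_lessThan_mult_delta[OF a, of "P b"] P_sq[OF b a]
    by simp
  also have "\<dots> = ((if b = a then 1 else 0) - P b a) / 2"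
    by (simp add: field_simps)
  finally show ?thesis .
qed

text \<open>For a density kernel \<open>r\<close> and a Hermitian involution \<open>P\<close>, \<open>Tr(r P) = 1\<close> forces \<open>r P = r\<close>:
  the projector \<open>Q = (I - P) / 2\<close> has \<open>Tr(r Q) = 0\<close>, hence \<open>r Q = 0\<close>.\<close>
lemma psd_kernel_fixed_by_involution:
  assumes p: "psd_kernel N r" and trace_r: "(\<Sum>a<N. r a a) = 1"
    and P_cnj: "\<And>i j. cnj (P i j) = P j i"
    and P_sq: "\<And>a c. a < N \<Longrightarrow> c < N \<Longrightarrow> (\<Sum>b<N. P a b * P b c) = (if a = c then 1 else 0)"
    and trace_rP: "(\<Sum>a<N. \<Sum>b<N. r a b * P b a) = 1"
    and a: "a < N" and c: "c < N"
  shows "(\<Sum>b<N. r a b * P b c) = r a c"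
proof -
  define Q where "Q i j = ((if i = j then 1 else 0) - P i j) / 2" for i j
  have Q_cnj: "cnj (Q i j) = Q j i" for i j
    using P_cnj[of i j] by (auto simp: Q_def)
  have Q_idem: "(\<Sum>c<N. Q b c * Q c a) = Q b a" if "b < N" "a < N" for a b
    unfolding Q_def using involution_half_complement_idem[OF P_sq that] .
  have "(\<Sum>i<N. \<Sum>j<N. r i j * Q j i)
      = ((\<Sum>i<N. \<Sum>j<N. r i j * (if j = i then 1 else 0)) - (\<Sum>i<N. \<Sum>j<N. r i j * P j i)) / 2"
    by (simp add: Q_def sum_divide_distrib[symmetric] sum_subtractf right_diff_distrib)
  also have "(\<Sum>i<N. \<Sum>j<N. r i j * (if j = i then 1 else 0)) = (\<Sum>i<N. r i i)"
    by (intro sum.cong refl sum_lessThan_mult_delta) simp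
  also have "((\<Sum>i<N. r i i) - (\<Sum>i<N. \<Sum>j<N. r i j * P j i)) / 2 = 0"
    using trace_r trace_rP by simp
  finally have "(\<Sum>b<N. r a b * Q b c) = 0"
    using psd_kernel_trace_projector_zero[OF p Q_cnj Q_idem _ a c] by blast
  then have "((\<Sum>b<N. r a b * (if b = c then 1 else 0)) - (\<Sum>b<N. r a b * P b c)) / 2 = 0"
    by (simp add: Q_def sum_divide_distrib[symmetric] sum_subtractf right_diff_distrib)
  then show ?thesis
    using sum_lessThan_mult_delta[OF c, of "r a"] by simp
qed

section \<open>Stabilizer states\<close>

lemma proj_index: "i < 2 ^ n \<Longrightarrow> j < 2 ^ n \<Longrightarrow> proj n \<psi> $$ (i, j) = \<psi> $ i * cnj (\<psi> $ j)"
  by (simp add: proj_def)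

lemma unit_vec_n_inner: "unit_vec_n n \<psi> \<Longrightarrow> (\<Sum>i<(2::nat) ^ n. cnj (\<psi> $ i) * \<psi> $ i) = 1"
proof -
  assume unit: "unit_vec_n n \<psi>"
  have "(\<Sum>i<(2::nat) ^ n. cnj (\<psi> $ i) * \<psi> $ i) = (\<Sum>i<(2::nat) ^ n. complex_of_real ((cmod (\<psi> $ i))\<^sup>2))"
    by (intro sum.cong refl) (metis complex_norm_square mult.commute)
  also have "\<dots> = 1"
    using unit unfolding unit_vec_n_def of_real_sum[symmetric] by simp
  finally show ?thesis .
qed

lemma density_op_proj:
  assumes unit: "unit_vec_n n \<psi>"
  shows "density_op n (proj n \<psi>)"
  unfolding density_op_def
proof (intro conjI allI)
  show "proj n \<psi> \<in> carrier_mat (2 ^ n) (2 ^ n)"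
    by (simp add: proj_def)
  fix v :: "nat \<Rightarrow> complex"
  define s where "s = (\<Sum>i<(2::nat) ^ n. cnj (v i) * \<psi> $ i)"
  have "(\<Sum>i<(2::nat) ^ n. \<Sum>j<(2::nat) ^ n. cnj (v i) * proj n \<psi> $$ (i, j) * v j) = s * cnj s"
    unfolding s_def cnj_sum sum_product by (intro sum.cong refl) (simp add: proj_index mult_ac)
  also have "\<dots> = complex_of_real ((cmod s)\<^sup>2)"
    using complex_norm_square[of s] by simp
  finally show "let q = \<Sum>i<2 ^ n. \<Sum>j<2 ^ n. cnj (v i) * proj n \<psi> $$ (i, j) * v j in Im q = 0 \<and> Re q \<ge> 0"
    by simp
next
  show "(\<Sum>i<2 ^ n. proj n \<psi> $$ (i, i)) = 1"
    using unit_vec_n_inner[OF unit] by (simp add: proj_index mult.commute)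
qed

definition pauli_right_invariant :: "nat \<Rightarrow> complex \<Rightarrow> pvec \<Rightarrow> complex mat \<Rightarrow> bool" where
  "pauli_right_invariant n e f \<rho> \<longleftrightarrow>
     (\<forall>a<2 ^ n. \<forall>c<2 ^ n. e * (\<Sum>b<(2::nat) ^ n. \<rho> $$ (a, b) * pauli_kernel n f b c) = \<rho> $$ (a, c))"

locale stabilizer_eigenvector =
  fixes n :: nat and S :: "pvec set" and \<psi> :: "complex vec" and \<epsilon> :: "pvec \<Rightarrow> complex"
  assumes self_dual: "self_dual n S"
    and unit: "unit_vec_n n \<psi>"
    and sign: "f \<in> S \<Longrightarrow> \<epsilon> f = 1 \<or> \<epsilon> f = -1"
    and eigen: "f \<in> S \<Longrightarrow> pauli n f *\<^sub>v \<psi> = \<epsilon> f \<cdot>\<^sub>v \<psi>"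
begin

lemma sign_mult_self: "f \<in> S \<Longrightarrow> \<epsilon> f * \<epsilon> f = 1"
  using sign[of f] by auto

lemma cnj_sign: "f \<in> S \<Longrightarrow> cnj (\<epsilon> f) = \<epsilon> f"
  using sign[of f] by auto

lemma subspace: "f2_subspace n S"
  using self_dual unfolding self_dual_def by blast

lemma inner_self: "(\<Sum>i<(2::nat) ^ n. cnj (\<psi> $ i) * \<psi> $ i) = 1"
  by (rule unit_vec_n_inner[OF unit])

lemma eigen_apply: "f \<in> S \<Longrightarrow> i < 2 ^ n \<Longrightarrow> pauli_apply n f (\<lambda>j. \<psi> $ j) i = \<epsilon> f * \<psi> $ i"
  using arg_cong[OF eigen, of f "\<lambda>v. v $ i"] unit pauli_mult_mat_vec[of \<psi> n i f]
  by (simp add: unit_vec_n_def)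

lemma ex_nonzero: obtains x where "x < 2 ^ n" "\<psi> $ x \<noteq> 0"
  using inner_self by (metis (no_types, lifting) mult_zero_right sum.neutral zero_neq_one lessThan_iff)

text \<open>For \<open>h \<notin> S\<close>, maximality of \<open>S\<close> gives \<open>g \<in> S\<close> anticommuting with \<open>h\<close>; as \<open>\<epsilon>(g) \<sigma>(g)\<close>
  fixes both \<open>\<psi>\<close> and \<open>z\<close>, the matrix element \<open>\<langle>\<psi>, \<sigma>(h) z\<rangle>\<close> equals its own negative.\<close>
lemma inner_pauli_apply_fixed_orthogonal:
  assumes fixed: "\<And>f i. f \<in> S \<Longrightarrow> i < 2 ^ n \<Longrightarrow> pauli_apply n f z i = \<epsilon> f * z i"
    and orth: "(\<Sum>i<(2::nat) ^ n. cnj (\<psi> $ i) * z i) = 0"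
    and h: "h \<in> Gn n"
  shows "(\<Sum>i<(2::nat) ^ n. cnj (\<psi> $ i) * pauli_apply n h z i) = 0"
proof (cases "h \<in> S")
  case True
  then show ?thesis
    using orth by (simp add: fixed sum_distrib_left[symmetric] mult.left_commute)
next
  case False
  then obtain g where g: "g \<in> S" "symp n h g"
    using self_dual h unfolding self_dual_def by blast
  define u where "u = pauli_apply n h z"
  define A where "A = (\<Sum>i<(2::nat) ^ n. cnj (\<psi> $ i) * u i)"
  have flip: "pauli_apply n g u i = - \<epsilon> g * u i" for i
  proof -
    have "pauli_apply n h (pauli_apply n g z) i = \<epsilon> g * u i"
      unfolding u_def by (simp add: fixed g(1) pauli_apply_scale cong: pauli_apply_cong)
    then show ?thesis
      unfolding u_def using pauli_apply_anticommute[OF g(2), of z i] by (metis minus_minus mult_minus_left)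
  qed
  have "(\<Sum>i<(2::nat) ^ n. cnj (\<psi> $ i) * pauli_apply n g u i) = - \<epsilon> g * A"
    unfolding A_def flip by (simp add: sum_distrib_left sum_negf mult.left_commute)
  moreover have "(\<Sum>i<(2::nat) ^ n. cnj (\<psi> $ i) * pauli_apply n g u i) = \<epsilon> g * A"
    unfolding A_def pauli_apply_adjoint using g(1)
    by (simp add: eigen_apply cnj_sign sum_distrib_left mult.assoc)
  ultimately have "\<epsilon> g * A = 0"
    by auto
  then show ?thesis
    using sign_mult_self[OF g(1)] by (auto simp: A_def u_def)
qed

text \<open>Uniqueness of the stabilizer state: a common fixed vector of the \<open>\<epsilon>(f) \<sigma>(f)\<close> is a multiple
  of \<open>\<psi>\<close>, because its component \<open>z\<close> orthogonal to \<open>\<psi>\<close> has all Pauli matrix elements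
  \<open>\<langle>\<psi>, \<sigma>(h) z\<rangle> = 0\<close>.\<close>
lemma fixed_vector_eq_multiple:
  assumes fixed: "\<And>f i. f \<in> S \<Longrightarrow> i < 2 ^ n \<Longrightarrow> pauli_apply n f w i = \<epsilon> f * w i"
    and y: "y < 2 ^ n"
  shows "w y = (\<Sum>j<(2::nat) ^ n. cnj (\<psi> $ j) * w j) * \<psi> $ y"
proof -
  define c where "c = (\<Sum>j<(2::nat) ^ n. cnj (\<psi> $ j) * w j)"
  define z where "z j = w j - c * \<psi> $ j" for j
  have z_fixed: "pauli_apply n f z i = \<epsilon> f * z i" if "f \<in> S" "i < 2 ^ n" for f i
    unfolding z_def pauli_apply_diff pauli_apply_scale using that
    by (simp add: fixed eigen_apply algebra_simps)
  have "(\<Sum>i<(2::nat) ^ n. cnj (\<psi> $ i) * z i) = c - c * (\<Sum>i<(2::nat) ^ n. cnj (\<psi> $ i) * \<psi> $ i)"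
    by (simp add: z_def c_def right_diff_distrib sum_subtractf sum_distrib_left mult_ac)
  then have z_orth: "(\<Sum>i<(2::nat) ^ n. cnj (\<psi> $ i) * z i) = 0"
    by (simp add: inner_self)
  obtain x where x: "x < 2 ^ n" "\<psi> $ x \<noteq> 0"
    by (rule ex_nonzero)
  have "2 ^ n * cnj (\<psi> $ x) * z y = 0"
    using pauli_apply_completeness[OF x(1) y, of "\<lambda>j. \<psi> $ j" z, symmetric]
      inner_pauli_apply_fixed_orthogonal[OF z_fixed z_orth] bits_in_Gn by simp
  then show ?thesis
    using x(2) by (simp add: z_def c_def)
qed

lemma sign_padd:
  assumes "f \<in> S" "g \<in> S"
  shows "\<epsilon> f * \<epsilon> g * pauli_phase n f g = \<epsilon> (padd f g)"
proof -
  have fg: "padd f g \<in> S"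
    using subspace assms unfolding f2_subspace_def by blast
  obtain x where x: "x < 2 ^ n" "\<psi> $ x \<noteq> 0"
    by (rule ex_nonzero)
  have "pauli_apply n f (pauli_apply n g (\<lambda>j. \<psi> $ j)) x = \<epsilon> f * \<epsilon> g * \<psi> $ x"
    using assms x(1) by (simp add: eigen_apply pauli_apply_scale mult.assoc cong: pauli_apply_cong)
  moreover have "pauli_apply n f (pauli_apply n g (\<lambda>j. \<psi> $ j)) x = pauli_phase n f g * \<epsilon> (padd f g) * \<psi> $ x"
    using fg x(1) by (simp add: pauli_apply_pauli_apply eigen_apply mult.assoc)
  ultimately have "\<epsilon> f * \<epsilon> g = pauli_phase n f g * \<epsilon> (padd f g)"
    using x(2) by simp
  then have "pauli_phase n f g = \<epsilon> f * \<epsilon> g * \<epsilon> (padd f g)"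
    using sign_mult_self[OF fg] by (metis mult.assoc mult.right_neutral)
  then have "\<epsilon> f * \<epsilon> g * pauli_phase n f g = (\<epsilon> f * \<epsilon> f) * (\<epsilon> g * \<epsilon> g) * \<epsilon> (padd f g)"
    by (simp add: mult_ac)
  then show ?thesis
    using assms by (simp add: sign_mult_self)
qed

lemma sign_pzero: "\<epsilon> pzero = 1"
proof -
  have pzero: "pzero \<in> S"
    using subspace unfolding f2_subspace_def by blast
  obtain x where x: "x < 2 ^ n" "\<psi> $ x \<noteq> 0"
    by (rule ex_nonzero)
  have "pauli_apply n pzero (\<lambda>j. \<psi> $ j) x = \<psi> $ x"
    unfolding pauli_apply_def using x(1)
    by (subst sum_lessThan_single[OF x(1)]) (auto simp: pauli_kernel_pzero)
  then show ?thesis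
    using eigen_apply[OF pzero x(1)] x(2) by simp
qed

lemma S_loc_subset: "S_loc n part M S \<subseteq> S"
proof
  fix f
  assume "f \<in> S_loc n part M S"
  then show "f \<in> S"
    unfolding S_loc_def
  proof (induction rule: f2_span.induct)
    case zero
    then show ?case
      using subspace unfolding f2_subspace_def by blast
  next
    case (add x y)
    then have "x \<in> S"
      by (auto simp: colocal_def)
    then show ?case
      using add.IH subspace unfolding f2_subspace_def by blast
  qed
qed

lemma colocal_pauli_right_invariant:
  assumes dens: "density_op n \<rho>"
    and ptrace_eq: "ptrace n part \<alpha> \<rho> = ptrace n part \<alpha> (proj n \<psi>)"
    and g: "g \<in> colocal n part S \<alpha>"
  shows "pauli_right_invariant n (\<epsilon> g) g \<rho>"
proof -
  have gS: "g \<in> S" and g_trivial: "\<forall>j<n. part j = \<alpha> \<longrightarrow> \<not> fst g j \<and> \<not> snd g j"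
    using g unfolding colocal_def by auto
  define P where "P i j = \<epsilon> g * pauli_kernel n g i j" for i j
  have P_cnj: "cnj (P i j) = P j i" for i j
    by (simp add: P_def cnj_sign[OF gS] pauli_kernel_cnj)
  have P_sq: "(\<Sum>b<(2::nat) ^ n. P i b * P b j) = (if i = j then 1 else 0)" if "i < 2 ^ n" "j < 2 ^ n" for i j
  proof -
    have "(\<Sum>b<(2::nat) ^ n. P i b * P b j)
        = (\<epsilon> g * \<epsilon> g) * (\<Sum>b<(2::nat) ^ n. pauli_kernel n g i b * pauli_kernel n g b j)"
      by (simp add: P_def sum_distrib_left mult_ac)
    also have "\<dots> = pauli_kernel n pzero i j"
      by (simp add: sign_mult_self[OF gS] pauli_kernel_mult pauli_phase_self padd_self)
    finally show ?thesis
      using that by (simp add: pauli_kernel_pzero)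
  qed
  have "(\<Sum>i<(2::nat) ^ n. \<Sum>j<(2::nat) ^ n. pauli_kernel n g i j * \<rho> $$ (j, i))
      = (\<Sum>i<(2::nat) ^ n. \<Sum>j<(2::nat) ^ n. pauli_kernel n g i j * proj n \<psi> $$ (j, i))"
    by (rule trace_pauli_mult_ptrace_cong[OF g_trivial ptrace_eq])
  also have "\<dots> = (\<Sum>i<(2::nat) ^ n. cnj (\<psi> $ i) * pauli_apply n g (\<lambda>j. \<psi> $ j) i)"
    by (intro sum.cong refl) (simp add: proj_index pauli_apply_def sum_distrib_left mult_ac)
  also have "\<dots> = \<epsilon> g"
    using gS by (simp add: eigen_apply mult.left_commute sum_distrib_left[symmetric] inner_self)
  finally have trace_g: "(\<Sum>i<(2::nat) ^ n. \<Sum>j<(2::nat) ^ n. pauli_kernel n g i j * \<rho> $$ (j, i)) = \<epsilon> g" .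
  have "(\<Sum>i<(2::nat) ^ n. \<Sum>j<(2::nat) ^ n. \<rho> $$ (i, j) * P j i)
      = \<epsilon> g * (\<Sum>j<(2::nat) ^ n. \<Sum>i<(2::nat) ^ n. pauli_kernel n g j i * \<rho> $$ (i, j))"
    by (subst sum.swap) (simp add: P_def sum_distrib_left mult_ac)
  also have "\<dots> = 1"
    using trace_g sign_mult_self[OF gS] by simp
  finally have trace_P: "(\<Sum>i<(2::nat) ^ n. \<Sum>j<(2::nat) ^ n. \<rho> $$ (i, j) * P j i) = 1" .
  have trace: "(\<Sum>i<(2::nat) ^ n. \<rho> $$ (i, i)) = 1"
    using dens unfolding density_op_def by blast
  show ?thesis
    unfolding pauli_right_invariant_def
  proof (intro allI impI)
    fix a c :: nat
    assume "a < 2 ^ n" "c < 2 ^ n"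
    from psd_kernel_fixed_by_involution[OF density_op_psd_kernel[OF dens] trace P_cnj P_sq trace_P this]
    show "\<epsilon> g * (\<Sum>b<(2::nat) ^ n. \<rho> $$ (a, b) * pauli_kernel n g b c) = \<rho> $$ (a, c)"
      by (simp add: P_def sum_distrib_left mult_ac)
  qed
qed

lemma S_loc_pauli_right_invariant:
  assumes dens: "density_op n \<rho>"
    and ptrace_eq: "\<forall>\<alpha>\<in>M. ptrace n part \<alpha> \<rho> = ptrace n part \<alpha> (proj n \<psi>)"
    and f: "f \<in> S_loc n part M S"
  shows "pauli_right_invariant n (\<epsilon> f) f \<rho>"
  using f unfolding S_loc_def
proof induction
  case zero
  show ?case
    unfolding pauli_right_invariant_def
  proof (intro allI impI)
    fix a c :: nat
    assume "a < 2 ^ n" "c < 2 ^ n"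
    then show "\<epsilon> pzero * (\<Sum>b<(2::nat) ^ n. \<rho> $$ (a, b) * pauli_kernel n pzero b c) = \<rho> $$ (a, c)"
      by (subst sum_lessThan_single[of c]) (auto simp: sign_pzero pauli_kernel_pzero)
  qed
next
  case (add x y)
  obtain \<alpha> where \<alpha>: "\<alpha> \<in> M" "x \<in> colocal n part S \<alpha>"
    using add.hyps(1) by blast
  have xS: "x \<in> S" and yS: "y \<in> S"
    using \<alpha>(2) add.hyps(2) S_loc_subset unfolding S_loc_def by (auto simp: colocal_def)
  have x_inv: "pauli_right_invariant n (\<epsilon> x) x \<rho>"
    using colocal_pauli_right_invariant[OF dens _ \<alpha>(2)] ptrace_eq \<alpha>(1) by simp
  show ?case
    unfolding pauli_right_invariant_def
  proof (intro allI impI)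
    fix a c :: nat
    assume a: "a < 2 ^ n" and c: "c < 2 ^ n"
    have "\<rho> $$ (a, c) = \<epsilon> y * (\<Sum>b<(2::nat) ^ n. \<rho> $$ (a, b) * pauli_kernel n y b c)"
      using add.IH a c unfolding pauli_right_invariant_def by simp
    also have "\<dots> = \<epsilon> y * (\<Sum>b<(2::nat) ^ n.
        (\<epsilon> x * (\<Sum>d<(2::nat) ^ n. \<rho> $$ (a, d) * pauli_kernel n x d b)) * pauli_kernel n y b c)"
      using x_inv a unfolding pauli_right_invariant_def by simp
    also have "\<dots> = \<epsilon> x * \<epsilon> y * (\<Sum>b<(2::nat) ^ n. \<Sum>d<(2::nat) ^ n.
        \<rho> $$ (a, d) * (pauli_kernel n x d b * pauli_kernel n y b c))"
      by (simp add: sum_distrib_left sum_distrib_right mult_ac)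
    also have "(\<Sum>b<(2::nat) ^ n. \<Sum>d<(2::nat) ^ n. \<rho> $$ (a, d) * (pauli_kernel n x d b * pauli_kernel n y b c))
        = (\<Sum>d<(2::nat) ^ n. \<Sum>b<(2::nat) ^ n. \<rho> $$ (a, d) * (pauli_kernel n x d b * pauli_kernel n y b c))"
      by (rule sum.swap)
    also have "\<dots> = (\<Sum>d<(2::nat) ^ n. \<rho> $$ (a, d) * (pauli_phase n x y * pauli_kernel n (padd x y) d c))"
      by (simp add: sum_distrib_left[symmetric] pauli_kernel_mult)
    also have "\<dots> = pauli_phase n x y * (\<Sum>d<(2::nat) ^ n. \<rho> $$ (a, d) * pauli_kernel n (padd x y) d c)"
      by (simp add: sum_distrib_left mult_ac)
    finally show "\<epsilon> (padd x y) * (\<Sum>b<(2::nat) ^ n. \<rho> $$ (a, b) * pauli_kernel n (padd x y) b c) = \<rho> $$ (a, c)"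
      using sign_padd[OF xS yS] by (metis mult.assoc)
  qed
qed

lemma right_invariant_entry_eq:
  assumes fixed: "\<forall>f\<in>S. pauli_right_invariant n (\<epsilon> f) f \<rho>"
    and a: "a < 2 ^ n" and b: "b < 2 ^ n"
  shows "\<rho> $$ (a, b) = cnj (\<Sum>j<(2::nat) ^ n. cnj (\<psi> $ j) * cnj (\<rho> $$ (a, j))) * cnj (\<psi> $ b)"
proof -
  have "pauli_apply n f (\<lambda>j. cnj (\<rho> $$ (a, j))) i = \<epsilon> f * cnj (\<rho> $$ (a, i))"
    if f: "f \<in> S" and i: "i < 2 ^ n" for f i
  proof -
    have "pauli_apply n f (\<lambda>j. cnj (\<rho> $$ (a, j))) i = cnj (\<Sum>j<(2::nat) ^ n. \<rho> $$ (a, j) * pauli_kernel n f j i)"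
      by (simp add: pauli_apply_def cnj_sum pauli_kernel_cnj mult.commute)
    also have "\<dots> = cnj (\<epsilon> f * \<rho> $$ (a, i))"
    proof -
      have "\<epsilon> f * (\<Sum>j<(2::nat) ^ n. \<rho> $$ (a, j) * pauli_kernel n f j i) = \<rho> $$ (a, i)"
        using fixed f a i unfolding pauli_right_invariant_def by blast
      from this[symmetric] show ?thesis
        using sign_mult_self[OF f] by (simp add: mult.assoc[symmetric])
    qed
    finally show ?thesis
      by (simp add: cnj_sign[OF f])
  qed
  from fixed_vector_eq_multiple[OF this b]
  show ?thesis
    by (metis complex_cnj_cnj complex_cnj_mult)
qed

lemma right_invariant_density_eq_proj:
  assumes dens: "density_op n \<rho>"
    and fixed: "\<forall>f\<in>S. pauli_right_invariant n (\<epsilon> f) f \<rho>"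
  shows "\<rho> = proj n \<psi>"
proof -
  define d where "d a = cnj (\<Sum>j<(2::nat) ^ n. cnj (\<psi> $ j) * cnj (\<rho> $$ (a, j)))" for a
  have rows: "\<rho> $$ (a, b) = d a * cnj (\<psi> $ b)" if "a < 2 ^ n" "b < 2 ^ n" for a b
    unfolding d_def by (rule right_invariant_entry_eq[OF fixed that])
  obtain x where x: "x < 2 ^ n" "\<psi> $ x \<noteq> 0"
    by (rule ex_nonzero)
  define \<kappa> where "\<kappa> = cnj (d x) / cnj (\<psi> $ x)"
  have entries: "\<rho> $$ (a, b) = \<kappa> * (\<psi> $ a * cnj (\<psi> $ b))" if a: "a < 2 ^ n" and b: "b < 2 ^ n" for a b
  proof -
    have "cnj (\<rho> $$ (x, a)) = \<rho> $$ (a, x)"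
      by (rule psd_kernel_cnj[OF density_op_psd_kernel[OF dens] x(1) a])
    then have "d a = \<kappa> * \<psi> $ a"
      using rows[OF a x(1)] rows[OF x(1) a] x(2) unfolding \<kappa>_def by (simp add: field_simps)
    then show ?thesis
      using rows[OF a b] by simp
  qed
  have "1 = (\<Sum>a<(2::nat) ^ n. \<rho> $$ (a, a))"
    using dens unfolding density_op_def by simp
  also have "\<dots> = \<kappa>"
    using inner_self by (simp add: entries sum_distrib_left[symmetric] mult.commute)
  finally have "\<kappa> = 1" ..
  show ?thesis
  proof (rule eq_matI)
    show "dim_row \<rho> = dim_row (proj n \<psi>)" "dim_col \<rho> = dim_col (proj n \<psi>)"
      using dens by (auto simp: density_op_def proj_def)
  qed (simp_all add: proj_def entries \<open>\<kappa> = 1\<close>)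
qed

end

theorem lemma2:
  fixes n :: nat and part :: "nat \<Rightarrow> 'm" and M :: "'m set"
    and S :: "pvec set" and \<psi> :: "complex vec"
  assumes "finite M"
    and "\<forall>j<n. part j \<in> M"
    and "stabilizer_state n S \<psi>"
    and "S = S_loc n part M S"
  shows "Gamma n part M \<psi> = {proj n \<psi>}"
proof -
  obtain \<epsilon> where "stabilizer_eigenvector n S \<psi> \<epsilon>"
    using assms(3) unfolding stabilizer_state_def stabilizer_eigenvector_def by blast
  then interpret stabilizer_eigenvector n S \<psi> \<epsilon> .
  have "\<rho> = proj n \<psi>" if \<rho>: "\<rho> \<in> Gamma n part M \<psi>" for \<rho>
  proof (rule right_invariant_density_eq_proj)
    show dens: "density_op n \<rho>"
      using \<rho> unfolding Gamma_def by blast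
    have marginals: "\<forall>\<alpha>\<in>M. ptrace n part \<alpha> \<rho> = ptrace n part \<alpha> (proj n \<psi>)"
      using \<rho> unfolding Gamma_def by blast
    show "\<forall>f\<in>S. pauli_right_invariant n (\<epsilon> f) f \<rho>"
      using S_loc_pauli_right_invariant[OF dens marginals] assms(4) by simp
  qed
  moreover have "proj n \<psi> \<in> Gamma n part M \<psi>"
    using density_op_proj[OF unit] unfolding Gamma_def by simp
  ultimately show ?thesis
    by blast
qed

end
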